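(* There exists a constant $D>1$ such that testing $\mathsf{Lattice\text{-}Eval}((\{0,1\};\wedge,\vee),D)$ restricted to instances with threshold $\ell=1$ with one-sided error requires a linear number of queries; i.e., there is $\epsilon>0$ such that every one-sided-error $\epsilon$-tester for this problem makes $\Omega(n)$ queries on some instances with $n$ variables.
   Context: For a finite lattice $\mathbb L=(L;\wedge,\vee)$ and a constant $D>1$, $\mathsf{Lattice\text{-}Eval}(\mathbb L,D)$ is the assignment problem whose instances consist of: a circuit $C$ on a variable set $V$ over the basis $\{\wedge,\vee\}$ (gates of fan-in 2) of depth less than $D+D\log_2|V|$; an element $\ell\in L$; and a weight function $w:V\to[0,1]$ with $\sum_x w(x)=1$. Assignments are maps $f:V\to L$, and $f$ is satisfying if $C(f)\ge\ell$ in the lattice order, where $C(f)$ is the value of $C$ under $f$. Distance: $\mathrm{dist}_{\mathcal I}(f)$ is the minimum over satisfying $g$ of $\sum_{x:f(x)\ne g(x)}w(x)$; $f$ is $\epsilon$-far if this exceeds $\epsilon$. A one-sided $\epsilon$-tester gets the instance and $\epsilon$, queries values of $f$, always accepts satisfying $f$ and rejects $\epsilon$-far $f$ with probability $\ge 2/3$. *)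

theory Defs
  imports "HOL-Probability.Probability"
begin

text \<open>Circuits over the basis {and, or} with fan-in 2, variables indexed by naturals.
  Circuits are represented as formula trees (unfolding a circuit does not change its
  value or its depth).\<close>
datatype circ = CVar nat | CAnd circ circ | COr circ circ

fun cvars :: "circ \<Rightarrow> nat set" where
  "cvars (CVar x) = {x}"
| "cvars (CAnd a b) = cvars a \<union> cvars b"
| "cvars (COr a b) = cvars a \<union> cvars b"

fun cdepth :: "circ \<Rightarrow> nat" where
  "cdepth (CVar x) = 0"
| "cdepth (CAnd a b) = Suc (max (cdepth a) (cdepth b))"
| "cdepth (COr a b) = Suc (max (cdepth a) (cdepth b))"

text \<open>Evaluation in the two-element lattice ({0,1}; and, or), with 0 = False, 1 = True.\<close>
fun ceval :: "circ \<Rightarrow> (nat \<Rightarrow> bool) \<Rightarrow> bool" where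
  "ceval (CVar x) f = f x"
| "ceval (CAnd a b) f = (ceval a f \<and> ceval b f)"
| "ceval (COr a b) f = (ceval a f \<or> ceval b f)"

text \<open>An cinstance with threshold l = 1: variable set V, circuit C, weights w.\<close>
type_synonym cinstance = "nat set \<times> circ \<times> (nat \<Rightarrow> real)"

definition valid_instance :: "real \<Rightarrow> cinstance \<Rightarrow> bool" where
  "valid_instance D I = (case I of (V, C, w) \<Rightarrow>
      finite V \<and> cvars C \<subseteq> V \<and>
      real (cdepth C) < D + D * log 2 (real (card V)) \<and>
      (\<forall>x\<in>V. 0 \<le> w x \<and> w x \<le> 1) \<and> (\<Sum>x\<in>V. w x) = 1)"

text \<open>Satisfying: C(f) \<ge> 1, i.e. C(f) = 1.\<close>
definition satisfying :: "cinstance \<Rightarrow> (nat \<Rightarrow> bool) \<Rightarrow> bool" where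
  "satisfying I f = (case I of (V, C, w) \<Rightarrow> ceval C f)"

definition inst_dist :: "cinstance \<Rightarrow> (nat \<Rightarrow> bool) \<Rightarrow> real" where
  "inst_dist I f = (case I of (V, C, w) \<Rightarrow>
     Inf ((\<lambda>g. \<Sum>x\<in>{x\<in>V. f x \<noteq> g x}. w x) ` {g. satisfying I g}))"

definition eps_far :: "real \<Rightarrow> cinstance \<Rightarrow> (nat \<Rightarrow> bool) \<Rightarrow> bool" where
  "eps_far \<epsilon> I f = (inst_dist I f > \<epsilon>)"

text \<open>Deterministic adaptive query algorithms (decision trees); a randomized tester is a
  probability distribution over decision trees (chosen depending on the input cinstance).\<close>
datatype qtree = Leaf bool | Query nat "bool \<Rightarrow> qtree"

primrec run :: "qtree \<Rightarrow> (nat \<Rightarrow> bool) \<Rightarrow> bool" where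
  "run (Leaf b) f = b"
| "run (Query x k) f = run (k (f x)) f"

primrec nqueries :: "qtree \<Rightarrow> (nat \<Rightarrow> bool) \<Rightarrow> nat" where
  "nqueries (Leaf b) f = 0"
| "nqueries (Query x k) f = Suc (nqueries (k (f x)) f)"

definition accept_prob :: "qtree pmf \<Rightarrow> (nat \<Rightarrow> bool) \<Rightarrow> real" where
  "accept_prob P f = measure_pmf.prob P {t. run t f}"

definition one_sided_tester :: "real \<Rightarrow> real \<Rightarrow> (cinstance \<Rightarrow> qtree pmf) \<Rightarrow> bool" where
  "one_sided_tester D \<epsilon> T = (\<forall>I. valid_instance D I \<longrightarrow>
      (\<forall>f. satisfying I f \<longrightarrow> accept_prob (T I) f = 1) \<and>
      (\<forall>f. eps_far \<epsilon> I f \<longrightarrow> 1 - accept_prob (T I) f \<ge> 2/3))"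

end

theory Submission
  imports Defs
begin

text \<open>Compose random majority-of-three gates h times over uniformly random variables. If a
  fraction p of the variables is true, the circuit evaluates to true with probability
  \<open>amp\<^sup>h p\<close> for \<open>amp p = 3p\<^sup>2 - 2p\<^sup>3\<close>, which pushes p \<le> 1/6 doubly exponentially towards 0 and
  p \<ge> 5/6 towards 1. With \<open>2\<^sup>h \<ge> n\<close> a union bound over all \<open>2\<^sup>n\<close> assignments yields a circuit of
  depth \<open>3h = O(log n)\<close> rejecting every assignment with at most n/6 ones and accepting every
  assignment with at least 5n/6 ones. For this circuit the all-false assignment is 1/6-far, yet a
  run of a tester making fewer than n/6 queries on it cannot distinguish it from the satisfying
  assignment that is true exactly off the queried variables; one-sidedness forces acceptance.\<close>

lemma ceval_cong: "(\<And>x. x \<in> cvars C \<Longrightarrow> f x = g x) \<Longrightarrow> ceval C f = ceval C g"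
  by (induction C) auto

definition maj3 :: "circ \<Rightarrow> circ \<Rightarrow> circ \<Rightarrow> circ" where
  "maj3 a b c = COr (CAnd a b) (CAnd c (COr a b))"

lemma ceval_maj3 [simp]:
  "ceval (maj3 a b c) f = (ceval a f \<and> ceval b f \<or> ceval c f \<and> (ceval a f \<or> ceval b f))"
  by (simp add: maj3_def)

lemma cvars_maj3 [simp]: "cvars (maj3 a b c) = cvars a \<union> cvars b \<union> cvars c"
  by (auto simp: maj3_def)

lemma cdepth_maj3 [simp]:
  "cdepth (maj3 a b c) = Suc (Suc (max (cdepth c) (Suc (max (cdepth a) (cdepth b)))))"
  by (simp add: maj3_def)

fun random_maj_circuit :: "nat \<Rightarrow> nat \<Rightarrow> circ pmf" where
  "random_maj_circuit n 0 = map_pmf CVar (pmf_of_set {..<n})"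
| "random_maj_circuit n (Suc k) =
     do {a \<leftarrow> random_maj_circuit n k; b \<leftarrow> random_maj_circuit n k; c \<leftarrow> random_maj_circuit n k;
         return_pmf (maj3 a b c)}"

lemma random_maj_circuit_support:
  assumes "n > 0" "C \<in> set_pmf (random_maj_circuit n k)"
  shows "cvars C \<subseteq> {..<n} \<and> cdepth C = 3 * k"
  using assms(2)
proof (induction k arbitrary: C)
  case 0
  have "{..<n} \<noteq> {}"
    using assms(1) by auto
  with 0 show ?case by auto
next
  case (Suc k)
  then show ?case by fastforce
qed

definition amp :: "real \<Rightarrow> real" where
  "amp p = 3 * p\<^sup>2 - 2 * p ^ 3"

lemma amp_factor: "amp p = p\<^sup>2 * (3 - 2 * p)"
  by (simp add: amp_def power2_eq_square power3_eq_cube algebra_simps)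

lemma amp_compl: "1 - amp p = amp (1 - p)"
  by (simp add: amp_def power2_eq_square power3_eq_cube algebra_simps)

lemma amp_range:
  assumes "0 \<le> p" "p \<le> 1"
  shows "0 \<le> amp p" "amp p \<le> 1"
proof -
  show "0 \<le> amp p"
    using assms by (simp add: amp_factor)
  have "0 \<le> amp (1 - p)"
    using assms by (simp add: amp_factor)
  then show "amp p \<le> 1"
    using amp_compl[of p] by linarith
qed

lemma amp_iter_range:
  assumes "0 \<le> p" "p \<le> 1"
  shows "0 \<le> (amp ^^ k) p \<and> (amp ^^ k) p \<le> 1"
  by (induction k) (use assms amp_range in auto)

lemma amp_iter_compl: "1 - (amp ^^ k) p = (amp ^^ k) (1 - p)"
  by (induction k) (simp_all add: amp_compl)

lemma amp_iter_small:
  assumes "0 \<le> p" "p \<le> 1/6"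
  shows "3 * (amp ^^ k) p \<le> (1/2) ^ (2 ^ k)"
proof (induction k)
  case 0
  then show ?case
    using assms by simp
next
  case (Suc k)
  let ?q = "(amp ^^ k) p"
  have q_nonneg: "0 \<le> ?q"
    using amp_iter_range assms by simp
  have "amp ?q \<le> ?q\<^sup>2 * 3"
    using q_nonneg unfolding amp_factor by (intro mult_left_mono) auto
  then have "3 * amp ?q \<le> 3 * (?q\<^sup>2 * 3)"
    by simp
  also have "\<dots> = (3 * ?q)\<^sup>2"
    by (simp add: power2_eq_square)
  also have "\<dots> \<le> ((1/2) ^ (2 ^ k))\<^sup>2"
    using Suc q_nonneg by (intro power_mono) auto
  also have "\<dots> = (1/2) ^ (2 ^ Suc k)"
    by (simp flip: power_mult add: mult.commute)
  finally show ?case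
    by simp
qed

lemma map_pmf_of_set_eq_bernoulli:
  assumes "finite A" "A \<noteq> {}"
  shows "map_pmf P (pmf_of_set A) = bernoulli_pmf (card (A \<inter> {x. P x}) / card A)"
proof (rule pmf_eqI)
  fix b
  have card_le: "card (A \<inter> {x. P x}) \<le> card A"
    using assms(1) by (intro card_mono) auto
  have "A \<inter> {x. \<not> P x} = A - (A \<inter> {x. P x})"
    by auto
  then have card_compl: "card (A \<inter> {x. \<not> P x}) = card A - card (A \<inter> {x. P x})"
    using assms(1) by (simp add: card_Diff_subset)
  have "card A > 0"
    using assms by auto
  then show "pmf (map_pmf P (pmf_of_set A)) b = pmf (bernoulli_pmf (card (A \<inter> {x. P x}) / card A)) b"
    using assms card_le
    by (cases b) (simp_all add: pmf_map measure_pmf_of_set vimage_def card_compl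
        diff_divide_distrib)
qed

lemma majority_of_bernoulli:
  assumes "0 \<le> p" "p \<le> 1"
  shows "do {a \<leftarrow> bernoulli_pmf p; b \<leftarrow> bernoulli_pmf p; c \<leftarrow> bernoulli_pmf p;
             return_pmf (a \<and> b \<or> c \<and> (a \<or> b))} = bernoulli_pmf (amp p)" (is "?maj = _")
proof (rule pmf_eqI)
  fix v
  show "pmf ?maj v = pmf (bernoulli_pmf (amp p)) v"
    using assms amp_range[OF assms]
    by (cases v) (simp_all add: pmf_bind amp_def power2_eq_square power3_eq_cube algebra_simps)
qed

lemma density_range:
  fixes n :: nat
  shows "0 \<le> real (card ({..<n} \<inter> {i. x i})) / n \<and> real (card ({..<n} \<inter> {i. x i})) / n \<le> 1"
proof -
  have "card ({..<n} \<inter> {i. x i}) \<le> card {..<n}"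
    by (rule card_mono) auto
  then show ?thesis
    by (auto simp: divide_le_eq_1)
qed

lemma eval_random_maj_circuit:
  assumes "n > 0"
  shows "map_pmf (\<lambda>C. ceval C x) (random_maj_circuit n k)
           = bernoulli_pmf ((amp ^^ k) (card ({..<n} \<inter> {i. x i}) / n))"
proof (induction k)
  case 0
  have "{..<n} \<noteq> {}"
    using assms by auto
  then show ?case
    by (simp add: map_pmf_comp map_pmf_of_set_eq_bernoulli)
next
  case (Suc k)
  let ?p = "(amp ^^ k) (card ({..<n} \<inter> {i. x i}) / n)"
  let ?M = "random_maj_circuit n k"
  have "map_pmf (\<lambda>C. ceval C x) (random_maj_circuit n (Suc k))
      = do {a \<leftarrow> map_pmf (\<lambda>C. ceval C x) ?M; b \<leftarrow> map_pmf (\<lambda>C. ceval C x) ?M;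
            c \<leftarrow> map_pmf (\<lambda>C. ceval C x) ?M; return_pmf (a \<and> b \<or> c \<and> (a \<or> b))}"
    by (simp add: map_bind_pmf bind_map_pmf)
  also have "\<dots> = do {a \<leftarrow> bernoulli_pmf ?p; b \<leftarrow> bernoulli_pmf ?p; c \<leftarrow> bernoulli_pmf ?p;
                       return_pmf (a \<and> b \<or> c \<and> (a \<or> b))}"
    by (simp only: Suc)
  also have "\<dots> = bernoulli_pmf (amp ?p)"
    using density_range amp_iter_range by (intro majority_of_bernoulli) blast+
  finally show ?case
    by simp
qed

lemma prob_random_maj_circuit_true:
  assumes "n > 0"
  shows "measure_pmf.prob (random_maj_circuit n k) {C. ceval C x}
           = (amp ^^ k) (card ({..<n} \<inter> {i. x i}) / n)"
proof -
  have "measure_pmf.prob (random_maj_circuit n k) {C. ceval C x}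
      = measure_pmf.prob (map_pmf (\<lambda>C. ceval C x) (random_maj_circuit n k)) {True}"
    by (simp add: vimage_def)
  then show ?thesis
    using amp_iter_range density_range
    by (simp add: eval_random_maj_circuit[OF assms] measure_pmf_single)
qed

definition misclassifies :: "nat \<Rightarrow> circ \<Rightarrow> nat set \<Rightarrow> bool" where
  "misclassifies n C S \<longleftrightarrow>
     6 * card S \<le> n \<and> ceval C (\<lambda>i. i \<in> S) \<or> 5 * n \<le> 6 * card S \<and> \<not> ceval C (\<lambda>i. i \<in> S)"

definition threshold_circuit :: "nat \<Rightarrow> circ \<Rightarrow> bool" where
  "threshold_circuit n C \<longleftrightarrow> (\<forall>S \<subseteq> {..<n}. \<not> misclassifies n C S)"

lemma prob_random_maj_circuit_misclassifies:
  assumes "n > 0" "S \<subseteq> {..<n}"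
  shows "measure_pmf.prob (random_maj_circuit n h) {C. misclassifies n C S} \<le> (1/3) * (1/2) ^ (2 ^ h)"
proof -
  let ?M = "random_maj_circuit n h"
  let ?p = "real (card S) / n"
  have "{..<n} \<inter> {i. i \<in> S} = S"
    using assms(2) by auto
  then have prob_true: "measure_pmf.prob ?M {C. ceval C (\<lambda>i. i \<in> S)} = (amp ^^ h) ?p"
    using prob_random_maj_circuit_true[OF assms(1)] by metis
  have "card S \<le> n"
    using card_mono[OF _ assms(2)] by simp
  then have p_range: "0 \<le> ?p" "?p \<le> 1"
    using assms(1) by auto
  consider (sparse) "6 * card S \<le> n" | (dense) "5 * n \<le> 6 * card S"
    | (middle) "\<not> 6 * card S \<le> n" "\<not> 5 * n \<le> 6 * card S"
    by blast
  then show ?thesis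
  proof cases
    case sparse
    then have "\<not> 5 * n \<le> 6 * card S"
      using assms(1) by linarith
    with sparse have "{C. misclassifies n C S} = {C. ceval C (\<lambda>i. i \<in> S)}"
      by (auto simp: misclassifies_def)
    moreover have "?p \<le> 1/6"
      using sparse assms(1) by (simp add: field_simps)
    then have "3 * (amp ^^ h) ?p \<le> (1/2) ^ (2 ^ h)"
      using amp_iter_small p_range by blast
    ultimately show ?thesis
      using prob_true by simp
  next
    case dense
    then have "\<not> 6 * card S \<le> n"
      using assms(1) by linarith
    with dense have "{C. misclassifies n C S} = UNIV - {C. ceval C (\<lambda>i. i \<in> S)}"
      by (auto simp: misclassifies_def)
    then have "measure_pmf.prob ?M {C. misclassifies n C S} = 1 - (amp ^^ h) ?p"
      using prob_true measure_pmf.prob_compl[of "{C. ceval C (\<lambda>i. i \<in> S)}" ?M] by simp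
    then have "measure_pmf.prob ?M {C. misclassifies n C S} = (amp ^^ h) (1 - ?p)"
      by (simp add: amp_iter_compl)
    moreover have "1 - ?p \<le> 1/6"
      using dense assms(1) by (simp add: field_simps)
    ultimately show ?thesis
      using amp_iter_small[of "1 - ?p" h] p_range by simp
  next
    case middle
    then show ?thesis
      by (simp add: misclassifies_def)
  qed
qed

lemma measure_pmf_lt_1_obtain:
  assumes "measure_pmf.prob M A < 1"
  obtains x where "x \<in> set_pmf M" "x \<notin> A"
proof -
  have "\<not> set_pmf M \<subseteq> A"
  proof
    assume "set_pmf M \<subseteq> A"
    then have "measure_pmf.prob M A = 1"
      by (subst measure_pmf.prob_eq_1) (auto simp: AE_measure_pmf_iff)
    with assms show False
      by simp
  qed
  then show thesis
    using that by blast
qed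

lemma threshold_circuit_exists:
  assumes "n > 0" "n \<le> 2 ^ h"
  obtains C where "cvars C \<subseteq> {..<n}" "cdepth C = 3 * h" "threshold_circuit n C"
proof -
  let ?M = "random_maj_circuit n h"
  let ?Bad = "\<Union>S \<in> Pow {..<n}. {C. misclassifies n C S}"
  have error_bound: "measure_pmf.prob ?M {C. misclassifies n C S} \<le> (1/3) * (1/2) ^ n"
    if "S \<in> Pow {..<n}" for S
  proof -
    have "measure_pmf.prob ?M {C. misclassifies n C S} \<le> (1/3) * (1/2) ^ (2 ^ h)"
      using that prob_random_maj_circuit_misclassifies[OF assms(1)] by simp
    also have "\<dots> \<le> (1/3) * (1/2) ^ n"
      using assms(2) by (simp add: power_decreasing)
    finally show ?thesis .
  qed
  have "measure_pmf.prob ?M ?Bad \<le> (\<Sum>S \<in> Pow {..<n}. measure_pmf.prob ?M {C. misclassifies n C S})"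
    by (rule measure_pmf.finite_measure_subadditive_finite) auto
  also have "\<dots> \<le> (\<Sum>S \<in> Pow {..<n}. (1/3) * (1/2) ^ n)"
    using error_bound by (rule sum_mono)
  also have "\<dots> = 1/3"
    by (simp add: card_Pow power_one_over)
  finally have "measure_pmf.prob ?M ?Bad < 1"
    by simp
  then obtain C where C: "C \<in> set_pmf ?M" "C \<notin> ?Bad"
    by (rule measure_pmf_lt_1_obtain)
  then have "threshold_circuit n C"
    unfolding threshold_circuit_def by blast
  with C(1) show thesis
    using that random_maj_circuit_support[OF assms(1)] by blast
qed

primrec queried :: "qtree \<Rightarrow> (nat \<Rightarrow> bool) \<Rightarrow> nat set" where
  "queried (Leaf b) f = {}"
| "queried (Query x k) f = insert x (queried (k (f x)) f)"

lemma finite_queried: "finite (queried t f)"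
  by (induction t) auto

lemma card_queried_le: "card (queried t f) \<le> nqueries t f"
proof (induction t)
  case (Query x k)
  then have "card (queried (k (f x)) f) \<le> nqueries (k (f x)) f"
    by simp
  then show ?case
    by (simp add: card_insert_if finite_queried)
qed simp

lemma run_cong_queried: "(\<And>x. x \<in> queried t f \<Longrightarrow> g x = f x) \<Longrightarrow> run t g = run t f"
  by (induction t) auto

lemma run_if_accept_prob_eq_1:
  assumes "accept_prob P f = 1" "t \<in> set_pmf P"
  shows "run t f"
  using assms measure_pmf.prob_eq_1[of "{t. run t f}" P]
  by (auto simp: accept_prob_def AE_measure_pmf_iff)

lemma accept_prob_eq_1_if_fooled:
  assumes "\<And>t. t \<in> set_pmf P \<Longrightarrow> \<exists>g. accept_prob P g = 1 \<and> (\<forall>x \<in> queried t f. g x = f x)"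
  shows "accept_prob P f = 1"
proof -
  have "run t f" if "t \<in> set_pmf P" for t
    using assms[OF that] run_if_accept_prob_eq_1[OF _ that] run_cong_queried by metis
  then show ?thesis
    unfolding accept_prob_def by (subst measure_pmf.prob_eq_1) (auto simp: AE_measure_pmf_iff)
qed

definition uniform_instance :: "nat \<Rightarrow> circ \<Rightarrow> cinstance" where
  "uniform_instance n C = ({..<n}, C, \<lambda>_. 1 / real n)"

lemma valid_uniform_instance:
  assumes "n > 0" "cvars C \<subseteq> {..<n}" "real (cdepth C) < D + D * log 2 n"
  shows "valid_instance D (uniform_instance n C)"
  using assms by (simp add: valid_instance_def uniform_instance_def)

lemma satisfying_uniform_instance:
  assumes "cvars C \<subseteq> {..<n}"
  shows "satisfying (uniform_instance n C) g \<longleftrightarrow> ceval C (\<lambda>i. i \<in> {x \<in> {..<n}. g x})"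
  using assms ceval_cong[of C g "\<lambda>i. i \<in> {x \<in> {..<n}. g x}"]
  by (auto simp: satisfying_def uniform_instance_def)

lemma threshold_circuit_rejects_sparse:
  "threshold_circuit n C \<Longrightarrow> S \<subseteq> {..<n} \<Longrightarrow> 6 * card S \<le> n \<Longrightarrow> \<not> ceval C (\<lambda>i. i \<in> S)"
  by (auto simp: threshold_circuit_def misclassifies_def)

lemma threshold_circuit_accepts_dense:
  "threshold_circuit n C \<Longrightarrow> S \<subseteq> {..<n} \<Longrightarrow> 5 * n \<le> 6 * card S \<Longrightarrow> ceval C (\<lambda>i. i \<in> S)"
  by (auto simp: threshold_circuit_def misclassifies_def)

lemma threshold_instance_all_false_far:
  assumes "n > 0" "cvars C \<subseteq> {..<n}" "threshold_circuit n C"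
  shows "1/6 \<le> inst_dist (uniform_instance n C) (\<lambda>_. False)"
proof -
  let ?I = "uniform_instance n C"
  let ?dist = "\<lambda>g. \<Sum>x \<in> {x \<in> {..<n}. False \<noteq> g x}. 1 / real n"
  have "satisfying ?I (\<lambda>_. True)"
    using assms threshold_circuit_accepts_dense[of n C "{..<n}"]
    by (simp add: satisfying_uniform_instance)
  then have nonempty: "?dist ` {g. satisfying ?I g} \<noteq> {}"
    by blast
  have "1/6 \<le> ?dist g" if "satisfying ?I g" for g
  proof -
    let ?S = "{x \<in> {..<n}. g x}"
    have "\<not> 6 * card ?S \<le> n"
      using that assms threshold_circuit_rejects_sparse[of n C ?S]
      by (auto simp: satisfying_uniform_instance)
    then show ?thesis
      using assms(1) by (simp add: field_simps)
  qed
  then have "1/6 \<le> Inf (?dist ` {g. satisfying ?I g})"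
    using nonempty by (intro cInf_greatest) auto
  then show ?thesis
    by (simp add: inst_dist_def uniform_instance_def)
qed

lemma threshold_instance_query_lower_bound:
  assumes "cvars C \<subseteq> {..<n}" "threshold_circuit n C"
    and accepts_satisfying: "\<And>g. satisfying (uniform_instance n C) g \<Longrightarrow> accept_prob P g = 1"
    and rejects: "accept_prob P (\<lambda>_. False) \<noteq> 1"
  shows "\<exists>t \<in> set_pmf P. 1/6 * real n \<le> real (nqueries t (\<lambda>_. False))"
proof (rule ccontr)
  assume "\<not> ?thesis"
  then have few_queries: "6 * nqueries t (\<lambda>_. False) < n" if "t \<in> set_pmf P" for t
    using that by force
  have "accept_prob P (\<lambda>_. False) = 1"
  proof (rule accept_prob_eq_1_if_fooled)
    fix t
    assume t: "t \<in> set_pmf P"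
    let ?Q = "queried t (\<lambda>_. False)"
    let ?g = "\<lambda>x. x \<notin> ?Q"
    have "{x \<in> {..<n}. ?g x} = {..<n} - ?Q"
      by auto
    then have "n - card ?Q \<le> card {x \<in> {..<n}. ?g x}"
      using diff_card_le_card_Diff[of ?Q "{..<n}"] finite_queried by simp
    moreover have "6 * card ?Q < n"
      using few_queries[OF t] card_queried_le[of t "\<lambda>_. False"] by linarith
    ultimately have "5 * n \<le> 6 * card {x \<in> {..<n}. ?g x}"
      by linarith
    then have "satisfying (uniform_instance n C) ?g"
      using assms(1,2) threshold_circuit_accepts_dense[of n C "{x \<in> {..<n}. ?g x}"]
      by (auto simp: satisfying_uniform_instance)
    then show "\<exists>g. accept_prob P g = 1 \<and> (\<forall>x \<in> ?Q. g x = False)"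
      using accepts_satisfying by blast
  qed
  with rejects show False
    by contradiction
qed

lemma logarithmic_height_exists:
  fixes n :: nat
  assumes "n > 0"
  obtains h :: nat where "n \<le> 2 ^ h" "real h < 1 + log 2 n"
proof
  let ?h = "nat \<lceil>log 2 n\<rceil>"
  have log_nonneg: "0 \<le> log 2 n"
    using assms by simp
  then show "real ?h < 1 + log 2 n"
    by linarith
  have "real n = 2 powr log 2 n"
    using assms by simp
  also have "\<dots> \<le> 2 powr ?h"
    using log_nonneg by (intro powr_mono) linarith+
  finally show "n \<le> 2 ^ ?h"
    by (simp add: powr_realpow)
qed

lemma one_sided_tester_query_lower_bound:
  assumes "one_sided_tester 3 (1/7) T" "n > 0"
  obtains I where "valid_instance 3 I" "card (fst I) = n"
    "\<exists>t \<in> set_pmf (T I). 1/6 * real n \<le> real (nqueries t (\<lambda>_. False))"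
proof -
  obtain h where h: "n \<le> 2 ^ h" "real h < 1 + log 2 n"
    using logarithmic_height_exists[OF assms(2)] .
  obtain C where C: "cvars C \<subseteq> {..<n}" "cdepth C = 3 * h" "threshold_circuit n C"
    using threshold_circuit_exists[OF assms(2) h(1)] .
  let ?I = "uniform_instance n C"
  have valid: "valid_instance 3 ?I"
    using assms(2) C h(2) by (intro valid_uniform_instance) auto
  then have "eps_far (1/7) ?I (\<lambda>_. False)"
    using threshold_instance_all_false_far[OF assms(2) C(1,3)] by (simp add: eps_far_def)
  then have "2/3 \<le> 1 - accept_prob (T ?I) (\<lambda>_. False)"
    using assms(1) valid unfolding one_sided_tester_def by blast
  then have "accept_prob (T ?I) (\<lambda>_. False) \<noteq> 1"
    by auto
  moreover have "accept_prob (T ?I) g = 1" if "satisfying ?I g" for g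
    using assms(1) valid that unfolding one_sided_tester_def by blast
  ultimately have "\<exists>t \<in> set_pmf (T ?I). 1/6 * real n \<le> real (nqueries t (\<lambda>_. False))"
    using threshold_instance_query_lower_bound[OF C(1,3)] by blast
  with valid show thesis
    using that by (simp add: uniform_instance_def)
qed

theorem mainTheorem13:
  shows "\<exists>D::real. D > 1 \<and> (\<exists>\<epsilon>::real. \<epsilon> > 0 \<and>
     (\<exists>c::real. c > 0 \<and> (\<exists>N::nat. \<forall>T. one_sided_tester D \<epsilon> T \<longrightarrow>
        (\<forall>n\<ge>N. \<exists>I. valid_instance D I \<and> card (fst I) = n \<and>
            (\<exists>t\<in>set_pmf (T I). \<exists>f. real (nqueries t f) \<ge> c * real n)))))"
proof -
  have "\<exists>I. valid_instance 3 I \<and> card (fst I) = n \<and>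
          (\<exists>t\<in>set_pmf (T I). \<exists>f. real (nqueries t f) \<ge> 1/6 * real n)"
    if tester: "one_sided_tester 3 (1/7) T" and n: "n \<ge> 1" for T n
  proof -
    from n have "n > 0"
      by simp
    then obtain I where "valid_instance 3 I" "card (fst I) = n"
      "\<exists>t \<in> set_pmf (T I). 1/6 * real n \<le> real (nqueries t (\<lambda>_. False))"
      by (rule one_sided_tester_query_lower_bound[OF tester])
    then show ?thesis
      by blast
  qed
  moreover have "(3::real) > 1" "(1/7::real) > 0" "(1/6::real) > 0"
    by simp_all
  ultimately show ?thesis
    by blast
qed

end
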